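(* Let $(\mathcal{A},\mathbf{m})$ be a multiarrangement in $\mathbb{Q}^l$ with $\mathcal{A}=\{H_1,\dots,H_n\}$, $H_i=\alpha_i^{-1}(0)$, where the $\alpha_i\in S_\mathbb{Z}=\mathbb{Z}[x_1,\dots,x_l]$ are linear forms such that no prime number divides any $\alpha_i$. Let $p$ be a good prime for $(\mathcal{A},\mathbf{m})$ and assume that the map $\pi_p^l\colon\operatorname{Ker}(\varphi_\mathbb{Z})\to D(\mathcal{A}_p,\mathbf{m})$ is surjective. If $(\mathcal{A}_p,\mathbf{m})$ is free in $\mathbb{F}_p^l$ with exponents $(e_1,\dots,e_l)$, then $(\mathcal{A},\mathbf{m})$ is free in $\mathbb{Q}^l$ with exponents $(e_1,\dots,e_l)$.
   Context: For a field $\mathbb{K}$ and $R=\mathbb{K}[x_1,\dots,x_l]$, a multiarrangement $(\mathcal{B},\mathbf{m})$ in $\mathbb{K}^l$ consists of distinct linear hyperplanes $\beta_i^{-1}(0)$ with multiplicities $\mathbf{m}\ge0$; $D(\mathcal{B},\mathbf{m})=\{\delta=\sum_j f_j\partial_{x_j}: f_j\in R,\ \delta(\beta_i)\in\beta_i^{\mathbf{m}_i}R\ \forall i\}$, identified with a submodule of $R^l$ via $\delta\mapsto(f_1,\dots,f_l)^t$. It is free with exponents $(e_1,\dots,e_l)$ if $D(\mathcal{B},\mathbf{m})$ is a free $R$-module with a basis of homogeneous derivations of polynomial degrees $e_1,\dots,e_l$. Let $S_p=\mathbb{F}_p[x_1,\dots,x_l]$, $\pi_p\colon S_\mathbb{Z}\to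 S_p$ reduction mod $p$, and $\pi_p^k\colon S_\mathbb{Z}^k\to S_p^k$ its componentwise extension. A prime $p$ is good if $\pi_p(\alpha_i)\ne\pi_p(\alpha_j)$ for all $i\ne j$; then $(\mathcal{A}_p,\mathbf{m})$ is the multiarrangement in $\mathbb{F}_p^l$ with hyperplanes $\pi_p(\alpha_i)^{-1}(0)$ of multiplicity $\mathbf{m}(H_i)$. Let $M(\mathcal{A},\mathbf{m})\subseteq S_\mathbb{Z}^n$ be generated by $\alpha_i^{\mathbf{m}(H_i)}e_i$, $A(\mathcal{A})=(\partial\alpha_i/\partial x_j)_{i,j}$, and $\varphi_\mathbb{Z}\colon S_\mathbb{Z}^l\to S_\mathbb{Z}^n/M(\mathcal{A},\mathbf{m})$, $g\mapsto A(\mathcal{A})g$. For good $p$, $\pi_p^l$ maps $\operatorname{Ker}(\varphi_\mathbb{Z})$ into $D(\mathcal{A}_p,\mathbf{m})\subseteq S_p^l$. *)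

theory Defs
  imports "HOL-Library.Poly_Mapping" "Berlekamp_Zassenhaus.Finite_Field"
begin

text \<open>Polynomial ring K[x_j : j in 'n] with variables indexed by a finite type 'n
  (so l = CARD('n)); monomials are exponent vectors 'n =>0 nat.\<close>

type_synonym ('n, 'k) mpoly = "('n \<Rightarrow>\<^sub>0 nat) \<Rightarrow>\<^sub>0 'k"

definition mp_var :: "'n \<Rightarrow> ('n, 'k::comm_ring_1) mpoly" where
  "mp_var j = Poly_Mapping.single (Poly_Mapping.single j 1) 1"

definition mp_const :: "'k::comm_ring_1 \<Rightarrow> ('n, 'k) mpoly" where
  "mp_const c = Poly_Mapping.single 0 c"

definition lin_form :: "('n::finite \<Rightarrow> 'k::comm_ring_1) \<Rightarrow> ('n, 'k) mpoly" where
  "lin_form c = (\<Sum>j\<in>UNIV. mp_const (c j) * mp_var j)"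

definition mp_pderiv :: "'n \<Rightarrow> ('n, 'k::comm_ring_1) mpoly \<Rightarrow> ('n, 'k) mpoly" where
  "mp_pderiv j p = (\<Sum>\<mu>\<in>Poly_Mapping.keys p.
      Poly_Mapping.single (\<mu> - Poly_Mapping.single j 1) (of_nat (Poly_Mapping.lookup \<mu> j) * Poly_Mapping.lookup p \<mu>))"

text \<open>A derivation delta = sum_j f_j d/dx_j, identified with (f_j)_j, applied to a polynomial.\<close>
definition apply_deriv :: "('n::finite \<Rightarrow> ('n, 'k::comm_ring_1) mpoly) \<Rightarrow> ('n, 'k) mpoly \<Rightarrow> ('n, 'k) mpoly" where
  "apply_deriv f q = (\<Sum>j\<in>UNIV. f j * mp_pderiv j q)"

text \<open>D(B,m) for the multiarrangement with defining linear forms beta_i (i < n), given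
  by coefficient vectors b i, and multiplicities m i.\<close>
definition deriv_module ::
  "nat \<Rightarrow> (nat \<Rightarrow> 'n::finite \<Rightarrow> 'k::comm_ring_1) \<Rightarrow> (nat \<Rightarrow> nat) \<Rightarrow> ('n \<Rightarrow> ('n, 'k) mpoly) set" where
  "deriv_module n b m = {f. \<forall>i<n. lin_form (b i) ^ m i dvd apply_deriv f (lin_form (b i))}"

definition mono_deg :: "('n::finite \<Rightarrow>\<^sub>0 nat) \<Rightarrow> nat" where
  "mono_deg \<mu> = (\<Sum>j\<in>UNIV. Poly_Mapping.lookup \<mu> j)"

definition homogeneous_of_deg :: "nat \<Rightarrow> ('n::finite, 'k::zero) mpoly \<Rightarrow> bool" where
  "homogeneous_of_deg d p \<longleftrightarrow> (\<forall>\<mu>\<in>Poly_Mapping.keys p. mono_deg \<mu> = d)"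

definition homog_deriv :: "nat \<Rightarrow> ('n::finite \<Rightarrow> ('n, 'k::zero) mpoly) \<Rightarrow> bool" where
  "homog_deriv d f \<longleftrightarrow> (\<forall>j. homogeneous_of_deg d (f j))"

definition free_with_exponents ::
  "nat \<Rightarrow> (nat \<Rightarrow> 'n::finite \<Rightarrow> 'k::comm_ring_1) \<Rightarrow> (nat \<Rightarrow> nat) \<Rightarrow> ('n \<Rightarrow> nat) \<Rightarrow> bool" where
  "free_with_exponents n b m e \<longleftrightarrow>
     (\<exists>\<theta> :: 'n \<Rightarrow> 'n \<Rightarrow> ('n, 'k) mpoly.
        (\<forall>k. \<theta> k \<in> deriv_module n b m \<and> homog_deriv (e k) (\<theta> k)) \<and>
        (\<forall>\<delta>\<in>deriv_module n b m. \<exists>!g :: 'n \<Rightarrow> ('n, 'k) mpoly.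
              \<delta> = (\<lambda>j. \<Sum>k\<in>UNIV. g k * \<theta> k j)))"

text \<open>Ker(phi_Z): g in S_Z^l with A(A) g in M(A,m), where M is generated by
  alpha_i^(m_i) e_i and A(A) = (d alpha_i / d x_j).\<close>
definition ker_phi_Z :: "nat \<Rightarrow> (nat \<Rightarrow> 'n::finite \<Rightarrow> int) \<Rightarrow> (nat \<Rightarrow> nat) \<Rightarrow> ('n \<Rightarrow> ('n, int) mpoly) set" where
  "ker_phi_Z n a m = {g. \<exists>h :: nat \<Rightarrow> ('n, int) mpoly. \<forall>i<n.
      (\<Sum>j\<in>UNIV. mp_pderiv j (lin_form (a i)) * g j) = h i * lin_form (a i) ^ m i}"

text \<open>Reduction mod p, p = CARD('p).\<close>
definition red_p :: "('n, int) mpoly \<Rightarrow> ('n, 'p::prime_card mod_ring) mpoly" where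
  "red_p q = Poly_Mapping.map of_int q"

definition red_p_vec :: "('n \<Rightarrow> ('n, int) mpoly) \<Rightarrow> ('n \<Rightarrow> ('n, 'p::prime_card mod_ring) mpoly)" where
  "red_p_vec g = (\<lambda>j. red_p (g j))"

definition good_prime :: "'p::prime_card itself \<Rightarrow> nat \<Rightarrow> (nat \<Rightarrow> 'n::finite \<Rightarrow> int) \<Rightarrow> bool" where
  "good_prime _ n a \<longleftrightarrow> (\<forall>i<n. \<forall>j<n. i \<noteq> j \<longrightarrow>
      (red_p (lin_form (a i)) :: ('n, 'p mod_ring) mpoly) \<noteq> red_p (lin_form (a j)))"

end

theory Submission
  imports Defs
begin

text \<open>Lift a homogeneous basis \<open>\<theta>\<^sub>1, \<dots>, \<theta>\<^sub>l\<close> of \<open>D(\<A>\<^sub>p, m)\<close> to homogeneous \<open>g\<^sub>k \<in> Ker(\<phi>\<^sub>\<int>)\<close>,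
  which is the module of integral derivations \<open>D\<^sub>\<int>(\<A>, m)\<close>. Since every \<open>\<alpha>\<^sub>i\<close> stays nonzero modulo
  \<open>p\<close>, a derivation in \<open>D\<^sub>\<int>\<close> that is divisible by \<open>p\<close> is \<open>p\<close> times a derivation in \<open>D\<^sub>\<int>\<close>.
  Hence a homogeneous \<open>\<delta> \<in> D\<^sub>\<int>\<close> of degree \<open>d\<close> can be written \<open>\<delta> = \<Sum> c\<^sub>k g\<^sub>k + p \<delta>'\<close>, with
  digits \<open>c\<^sub>k\<close> (lifts of the coordinates of \<open>\<delta> mod p\<close>) from a finite set and \<open>\<delta>'\<close> again
  homogeneous of degree \<open>d\<close> in \<open>D\<^sub>\<int>\<close>. Iterating this \<open>p\<close>-adic expansion, the remainders end up with
  bounded coefficients, so they repeat; a repetition \<open>\<delta>\<^bsub>s+T\<^esub> = \<delta>\<^sub>s\<close> turns the expansion into a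
  geometric series and puts \<open>\<delta>\<close> into the \<open>\<rat>[x]\<close>-span of the \<open>g\<^sub>k\<close>. The same descent shows that a
  relation \<open>\<Sum> v\<^sub>k g\<^sub>k = 0\<close> has all \<open>v\<^sub>k\<close> divisible by every power of \<open>p\<close>, so the \<open>g\<^sub>k\<close> are
  independent. Clearing denominators passes from \<open>\<int>\<close> to \<open>\<rat>\<close>.\<close>

abbreviation lookup :: "('a \<Rightarrow>\<^sub>0 'b::zero) \<Rightarrow> 'a \<Rightarrow> 'b" where
  "lookup \<equiv> Poly_Mapping.lookup"

abbreviation keys :: "('a \<Rightarrow>\<^sub>0 'b::zero) \<Rightarrow> 'a set" where
  "keys \<equiv> Poly_Mapping.keys"

abbreviation single :: "'a \<Rightarrow> 'b::zero \<Rightarrow> 'a \<Rightarrow>\<^sub>0 'b" where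
  "single \<equiv> Poly_Mapping.single"

lemma poly_mapping_sum_single: "(p :: 'a \<Rightarrow>\<^sub>0 'b::comm_monoid_add) = (\<Sum>\<mu>\<in>keys p. single \<mu> (lookup p \<mu>))"
proof (rule poly_mapping_eqI)
  fix \<nu>
  have "lookup (\<Sum>\<mu>\<in>keys p. single \<mu> (lookup p \<mu>)) \<nu> = (\<Sum>\<mu>\<in>keys p. lookup p \<mu> when \<mu> = \<nu>)"
    by (simp add: lookup_sum lookup_single)
  also have "\<dots> = lookup p \<nu>"
    by (cases "\<nu> \<in> keys p") (auto simp: when_def in_keys_iff)
  finally show "lookup p \<nu> = lookup (\<Sum>\<mu>\<in>keys p. single \<mu> (lookup p \<mu>)) \<nu>" by simp
qed

lemma lookup_map: "f 0 = 0 \<Longrightarrow> lookup (Poly_Mapping.map f p) \<mu> = f (lookup p \<mu>)"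
  by (simp add: Poly_Mapping.map.rep_eq when_def)

lemma lookup_mp_const_mult: "lookup (mp_const c * p) \<mu> = c * lookup p \<mu>"
  by (simp add: mp_const_def mult_map_scale_conv_mult[symmetric] Poly_Mapping.map.rep_eq when_def)

lemma mp_const_mult: "mp_const (c * d) = mp_const c * mp_const d"
  by (simp add: mp_const_def mult_single)

lemma mp_const_diff: "mp_const (c - d) = mp_const c - mp_const d"
  by (simp add: mp_const_def single_diff)

lemma mp_const_0 [simp]: "mp_const 0 = 0"
  by (simp add: mp_const_def)

lemma mp_const_1 [simp]: "mp_const 1 = 1"
  by (simp add: mp_const_def)

lemma mp_const_power: "mp_const (c ^ k) = mp_const c ^ k"
  by (induction k) (simp_all add: mp_const_mult)

lemma mp_const_mult_left_cancel:
  fixes c :: "'k::idom"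
  assumes "c \<noteq> 0"
  shows "mp_const c * p = mp_const c * q \<longleftrightarrow> p = q"
  using assms by (auto simp: poly_mapping_eq_iff fun_eq_iff lookup_mp_const_mult)

lemma mp_const_mult_eq_0_iff:
  fixes c :: "'k::idom"
  assumes "c \<noteq> 0"
  shows "mp_const c * p = 0 \<longleftrightarrow> p = 0"
  using mp_const_mult_left_cancel[OF assms, of p 0] by simp

lemma mp_const_mult_inverse: "(c :: 'k::field) \<noteq> 0 \<Longrightarrow> mp_const c * mp_const (inverse c) = 1"
  by (simp add: mp_const_mult[symmetric])

section \<open>Integer polynomials and their reductions\<close>

definition of_int_mpoly :: "('a \<Rightarrow>\<^sub>0 int) \<Rightarrow> ('a \<Rightarrow>\<^sub>0 'k::comm_ring_1)" where
  "of_int_mpoly = Poly_Mapping.map of_int"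

lemma lookup_of_int_mpoly [simp]: "lookup (of_int_mpoly p) \<mu> = of_int (lookup p \<mu>)"
  by (simp add: of_int_mpoly_def Poly_Mapping.map.rep_eq when_def)

lemma red_p_eq_of_int_mpoly: "red_p = of_int_mpoly"
  by (simp add: red_p_def of_int_mpoly_def fun_eq_iff)

lemma keys_of_int_mpoly: "keys (of_int_mpoly p) \<subseteq> keys p"
  by (auto simp: in_keys_iff)

lemma of_int_mpoly_add [simp]: "of_int_mpoly (p + q) = of_int_mpoly p + of_int_mpoly q"
  by (rule poly_mapping_eqI) (simp add: lookup_add)

lemma of_int_mpoly_diff [simp]: "of_int_mpoly (p - q) = of_int_mpoly p - of_int_mpoly q"
  by (rule poly_mapping_eqI) (simp add: lookup_minus)

lemma of_int_mpoly_0 [simp]: "of_int_mpoly 0 = 0"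
  by (rule poly_mapping_eqI) simp

lemma of_int_mpoly_sum: "of_int_mpoly (sum f A) = (\<Sum>x\<in>A. of_int_mpoly (f x))"
  by (induction A rule: infinite_finite_induct) auto

lemma of_int_mpoly_single [simp]: "of_int_mpoly (single \<mu> c) = single \<mu> (of_int c)"
  by (rule poly_mapping_eqI) (simp add: lookup_single when_def)

lemma of_int_mpoly_mult [simp]:
  "of_int_mpoly (p * q :: 'a::monoid_add \<Rightarrow>\<^sub>0 int) = of_int_mpoly p * of_int_mpoly q"
proof -
  have "of_int_mpoly (p * q) =
      of_int_mpoly ((\<Sum>\<mu>\<in>keys p. single \<mu> (lookup p \<mu>)) * (\<Sum>\<nu>\<in>keys q. single \<nu> (lookup q \<nu>)))"
    using poly_mapping_sum_single[of p] poly_mapping_sum_single[of q] by simp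
  also have "\<dots> = (\<Sum>\<mu>\<in>keys p. single \<mu> (of_int (lookup p \<mu>))) * (\<Sum>\<nu>\<in>keys q. single \<nu> (of_int (lookup q \<nu>)))"
    by (simp add: sum_distrib_left sum_distrib_right of_int_mpoly_sum mult_single)
  also have "\<dots> = of_int_mpoly p * of_int_mpoly q"
    using poly_mapping_sum_single[of p] poly_mapping_sum_single[of q]
    by (metis (no_types, lifting) of_int_mpoly_single of_int_mpoly_sum sum.cong)
  finally show ?thesis .
qed

lemma of_int_mpoly_1 [simp]: "of_int_mpoly (1 :: 'a::monoid_add \<Rightarrow>\<^sub>0 int) = 1"
  by (rule poly_mapping_eqI) (simp add: lookup_one when_def)

lemma of_int_mpoly_power [simp]: "of_int_mpoly (p ^ k :: 'a::monoid_add \<Rightarrow>\<^sub>0 int) = of_int_mpoly p ^ k"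
  by (induction k) auto

lemma of_int_mpoly_mp_const [simp]: "of_int_mpoly (mp_const c) = mp_const (of_int c)"
  by (simp add: mp_const_def)

lemma of_int_mpoly_eq_iff [simp]:
  "(of_int_mpoly p :: 'a \<Rightarrow>\<^sub>0 'k::{comm_ring_1,ring_char_0}) = of_int_mpoly q \<longleftrightarrow> p = q"
  by (simp add: poly_mapping_eq_iff fun_eq_iff)

lemma of_int_mpoly_eq_0_iff [simp]:
  "(of_int_mpoly p :: 'a \<Rightarrow>\<^sub>0 'k::{comm_ring_1,ring_char_0}) = 0 \<longleftrightarrow> p = 0"
  using of_int_mpoly_eq_iff[of p 0] by simp

section \<open>Homogeneous components\<close>

lemma mono_deg_add [simp]: "mono_deg (\<mu> + \<nu>) = mono_deg \<mu> + mono_deg \<nu>"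
  by (simp add: mono_deg_def lookup_add sum.distrib)

lemma mono_deg_0 [simp]: "mono_deg (0 :: 'n::finite \<Rightarrow>\<^sub>0 nat) = 0"
  by (simp add: mono_deg_def)

lemma mono_deg_single [simp]: "mono_deg (single (j::'n::finite) k) = k"
  by (simp add: mono_deg_def lookup_single when_def)

lemma lookup_le_mono_deg: "lookup \<mu> j \<le> mono_deg (\<mu> :: 'n::finite \<Rightarrow>\<^sub>0 nat)"
  unfolding mono_deg_def by (rule member_le_sum) auto

lemma finite_mono_deg_eq: "finite {\<mu> :: 'n::finite \<Rightarrow>\<^sub>0 nat. mono_deg \<mu> = d}"
proof -
  have "lookup ` {\<mu> :: 'n \<Rightarrow>\<^sub>0 nat. mono_deg \<mu> = d} \<subseteq> PiE UNIV (\<lambda>_. {..d})"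
    using lookup_le_mono_deg by (auto simp: PiE_UNIV_domain)
  then have "finite (lookup ` {\<mu> :: 'n \<Rightarrow>\<^sub>0 nat. mono_deg \<mu> = d})"
    by (rule finite_subset) (simp add: finite_PiE)
  moreover have "inj_on lookup {\<mu> :: 'n \<Rightarrow>\<^sub>0 nat. mono_deg \<mu> = d}"
    by (rule inj_onI, rule poly_mapping_eqI, simp)
  ultimately show ?thesis by (rule finite_imageD)
qed

definition hom_component :: "nat \<Rightarrow> ('n::finite, 'k::zero) mpoly \<Rightarrow> ('n, 'k) mpoly" where
  "hom_component d p = Poly_Mapping.mapp (\<lambda>\<mu> c. if mono_deg \<mu> = d then c else 0) p"

lemma lookup_hom_component: "lookup (hom_component d p) \<mu> = (if mono_deg \<mu> = d then lookup p \<mu> else 0)"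
  by (auto simp: hom_component_def lookup_mapp when_def in_keys_iff)

lemma hom_component_add: "hom_component d (p + q) = hom_component d p + hom_component d q"
  by (rule poly_mapping_eqI) (simp add: lookup_hom_component lookup_add)

lemma hom_component_0 [simp]: "hom_component d 0 = 0"
  by (rule poly_mapping_eqI) (simp add: lookup_hom_component)

lemma hom_component_sum: "hom_component d (sum f A) = (\<Sum>x\<in>A. hom_component d (f x))"
  by (induction A rule: infinite_finite_induct) (auto simp: hom_component_add)

lemma of_int_mpoly_hom_component: "of_int_mpoly (hom_component d p) = hom_component d (of_int_mpoly p)"
  by (rule poly_mapping_eqI) (simp add: lookup_hom_component)

lemma homogeneous_of_deg_iff_keys: "homogeneous_of_deg d p \<longleftrightarrow> keys p \<subseteq> {\<mu>. mono_deg \<mu> = d}"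
  by (auto simp: homogeneous_of_deg_def)

lemma homogeneous_hom_component: "homogeneous_of_deg d (hom_component d p)"
  by (auto simp: homogeneous_of_deg_def in_keys_iff lookup_hom_component split: if_splits)

lemma hom_component_homogeneous: "homogeneous_of_deg d p \<Longrightarrow> hom_component d p = p"
  by (rule poly_mapping_eqI) (auto simp: lookup_hom_component homogeneous_of_deg_def in_keys_iff)

lemma homogeneous_of_deg_subset_keys:
  "homogeneous_of_deg d p \<Longrightarrow> keys q \<subseteq> keys p \<Longrightarrow> homogeneous_of_deg d q"
  unfolding homogeneous_of_deg_iff_keys by blast

lemma homogeneous_of_deg_of_int_mpoly: "homogeneous_of_deg d p \<Longrightarrow> homogeneous_of_deg d (of_int_mpoly p)"
  by (erule homogeneous_of_deg_subset_keys) (rule keys_of_int_mpoly)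

lemma homogeneous_of_deg_0 [simp]: "homogeneous_of_deg d 0"
  by (simp add: homogeneous_of_deg_def)

lemma homogeneous_of_deg_add:
  "homogeneous_of_deg d p \<Longrightarrow> homogeneous_of_deg d q \<Longrightarrow> homogeneous_of_deg d (p + q)"
  unfolding homogeneous_of_deg_iff_keys using keys_add[of p q] by blast

lemma homogeneous_of_deg_diff:
  "homogeneous_of_deg d p \<Longrightarrow> homogeneous_of_deg d q \<Longrightarrow>
    homogeneous_of_deg d (p - q :: ('n::finite, 'k::ab_group_add) mpoly)"
  by (auto simp: homogeneous_of_deg_def in_keys_iff lookup_minus)

lemma homogeneous_of_deg_sum:
  "(\<And>x. x \<in> A \<Longrightarrow> homogeneous_of_deg d (f x)) \<Longrightarrow> homogeneous_of_deg d (sum f A)"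
  by (induction A rule: infinite_finite_induct) (auto intro: homogeneous_of_deg_add)

lemma homogeneous_of_deg_mult:
  assumes "homogeneous_of_deg d p" and "homogeneous_of_deg d' q"
  shows "homogeneous_of_deg (d + d') (p * q :: ('n::finite, 'k::comm_ring_1) mpoly)"
  unfolding homogeneous_of_deg_def
proof
  fix \<kappa> assume "\<kappa> \<in> keys (p * q)"
  then obtain \<mu> \<nu> where "\<kappa> = \<mu> + \<nu>" "\<mu> \<in> keys p" "\<nu> \<in> keys q"
    using keys_mult[of p q] by blast
  then show "mono_deg \<kappa> = d + d'" using assms by (simp add: homogeneous_of_deg_def)
qed

lemma homogeneous_of_deg_power:
  "homogeneous_of_deg d p \<Longrightarrow> homogeneous_of_deg (k * d) (p ^ k :: ('n::finite, 'k::comm_ring_1) mpoly)"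
proof (induction k)
  case 0
  show ?case by (simp add: homogeneous_of_deg_def)
next
  case (Suc k)
  then show ?case using homogeneous_of_deg_mult[of d p "k * d" "p ^ k"] by simp
qed

lemma homogeneous_of_deg_mp_const: "homogeneous_of_deg 0 (mp_const c :: ('n::finite, 'k::comm_ring_1) mpoly)"
  by (simp add: mp_const_def homogeneous_of_deg_def)

lemma sum_hom_components:
  assumes "finite D" and "mono_deg ` keys p \<subseteq> D"
  shows "(\<Sum>d\<in>D. hom_component d p) = p"
proof (rule poly_mapping_eqI)
  fix \<mu>
  have "lookup (\<Sum>d\<in>D. hom_component d p) \<mu> = (\<Sum>d\<in>D. if d = mono_deg \<mu> then lookup p \<mu> else 0)"
    by (auto simp: lookup_sum lookup_hom_component intro: sum.cong)
  also have "\<dots> = lookup p \<mu>"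
  proof (cases "mono_deg \<mu> \<in> D")
    case False
    then have "\<mu> \<notin> keys p" using assms(2) by auto
    then show ?thesis using False by (simp add: in_keys_iff sum.neutral)
  qed (use assms(1) in simp)
  finally show "lookup (\<Sum>d\<in>D. hom_component d p) \<mu> = lookup p \<mu>" .
qed

lemma hom_component_eq_0: "(\<And>\<mu>. \<mu> \<in> keys p \<Longrightarrow> mono_deg \<mu> \<noteq> d) \<Longrightarrow> hom_component d p = 0"
  by (rule poly_mapping_eqI) (auto simp: lookup_hom_component in_keys_iff)

lemma hom_component_mult_homogeneous:
  assumes q: "homogeneous_of_deg e q"
  shows "hom_component d (p * q) =
    (if e \<le> d then hom_component (d - e) p * q else (0 :: ('n::finite, 'k::comm_ring_1) mpoly))"
proof -
  have deg_keys_mult: "\<exists>\<mu>\<in>keys r. mono_deg \<kappa> = mono_deg \<mu> + e" if "\<kappa> \<in> keys (r * q)" for r \<kappa>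
    using keys_mult[of r q] that q by (force simp: homogeneous_of_deg_def)
  show ?thesis
  proof (cases "e \<le> d")
    case True
    define r where "r = p - hom_component (d - e) p"
    have "hom_component d (r * q) = 0"
    proof (rule hom_component_eq_0)
      fix \<kappa> assume "\<kappa> \<in> keys (r * q)"
      then obtain \<mu> where "\<mu> \<in> keys r" "mono_deg \<kappa> = mono_deg \<mu> + e"
        using deg_keys_mult by blast
      moreover from \<open>\<mu> \<in> keys r\<close> have "mono_deg \<mu> \<noteq> d - e"
        by (auto simp: r_def in_keys_iff lookup_minus lookup_hom_component)
      ultimately show "mono_deg \<kappa> \<noteq> d" using True by simp
    qed
    moreover have "homogeneous_of_deg d (hom_component (d - e) p * q)"
      using homogeneous_of_deg_mult[OF homogeneous_hom_component[of "d - e" p] q] True by simp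
    moreover have "p * q = hom_component (d - e) p * q + r * q"
      by (simp add: r_def algebra_simps)
    ultimately show ?thesis
      using True by (simp add: hom_component_add hom_component_homogeneous)
  next
    case False
    then show ?thesis by (force intro!: hom_component_eq_0 dest: deg_keys_mult)
  qed
qed

section \<open>Linear forms and partial derivatives\<close>

lemma lin_form_eq_sum_single: "lin_form c = (\<Sum>j\<in>UNIV. single (single j 1) (c j))"
  unfolding lin_form_def mp_const_def mp_var_def by (simp add: mult_single)

lemma homogeneous_lin_form: "homogeneous_of_deg 1 (lin_form c)"
  unfolding lin_form_eq_sum_single
  by (intro homogeneous_of_deg_sum) (simp add: homogeneous_of_deg_def)

lemma of_int_mpoly_lin_form: "of_int_mpoly (lin_form c) = lin_form (\<lambda>k. of_int (c k))"
  by (simp add: lin_form_eq_sum_single of_int_mpoly_sum)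

lemma mp_pderiv_eq_sum_superset:
  assumes "finite K" and "keys p \<subseteq> K"
  shows "mp_pderiv j p = (\<Sum>\<mu>\<in>K. single (\<mu> - single j 1) (of_nat (lookup \<mu> j) * lookup p \<mu>))"
  unfolding mp_pderiv_def by (rule sum.mono_neutral_left) (use assms in \<open>auto simp: in_keys_iff\<close>)

lemma mp_pderiv_add: "mp_pderiv j (p + q) = mp_pderiv j p + mp_pderiv j q"
proof -
  let ?K = "keys p \<union> keys q"
  let ?t = "\<lambda>r \<mu>. single (\<mu> - single j 1) (of_nat (lookup \<mu> j) * lookup r \<mu>)"
  have "mp_pderiv j (p + q) = (\<Sum>\<mu>\<in>?K. ?t (p + q) \<mu>)"
    by (intro mp_pderiv_eq_sum_superset) (use keys_add[of p q] in auto)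
  moreover have "mp_pderiv j p = (\<Sum>\<mu>\<in>?K. ?t p \<mu>)" "mp_pderiv j q = (\<Sum>\<mu>\<in>?K. ?t q \<mu>)"
    by (intro mp_pderiv_eq_sum_superset; simp)+
  ultimately show ?thesis
    by (simp add: lookup_add distrib_left single_add sum.distrib)
qed

lemma mp_pderiv_0 [simp]: "mp_pderiv j 0 = 0"
  by (simp add: mp_pderiv_def)

lemma mp_pderiv_sum: "mp_pderiv j (sum f A) = (\<Sum>x\<in>A. mp_pderiv j (f x))"
  by (induction A rule: infinite_finite_induct) (simp_all add: mp_pderiv_add)

lemma mp_pderiv_single: "mp_pderiv j (single \<mu> c) = single (\<mu> - single j 1) (of_nat (lookup \<mu> j) * c)"
  by (subst mp_pderiv_eq_sum_superset[of "{\<mu>}"]) auto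

lemma mp_pderiv_lin_form: "mp_pderiv j (lin_form c) = mp_const (c j)"
proof -
  have "mp_pderiv j (lin_form c) = (\<Sum>i\<in>UNIV. if i = j then mp_const (c j) else 0)"
    unfolding lin_form_eq_sum_single mp_pderiv_sum mp_pderiv_single
    by (intro sum.cong) (auto simp: lookup_single mp_const_def)
  then show ?thesis by simp
qed

lemma lookup_single_mult_shift: "lookup (single \<kappa> c * h) (\<kappa> + \<nu>) = c * lookup h (\<nu> :: 'n \<Rightarrow>\<^sub>0 nat)"
  by (simp add: lookup_mult lookup_single when_mult)

lemma lookup_single_mult_eq_0:
  assumes "\<And>\<mu>. \<nu> = \<kappa> + \<mu> \<Longrightarrow> lookup h \<mu> = 0"
  shows "lookup (single \<kappa> c * h) (\<nu> :: 'n \<Rightarrow>\<^sub>0 nat) = 0"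
proof -
  have "(\<lambda>\<mu>. lookup h \<mu> when \<nu> = \<kappa> + \<mu>) = (\<lambda>_. 0)"
    using assms by (auto simp: when_def)
  then have "Sum_any (\<lambda>\<mu>. lookup h \<mu> when \<nu> = \<kappa> + \<mu>) = 0"
    by (metis Sum_any.neutral)
  then show ?thesis by (simp add: lookup_mult lookup_single when_mult)
qed

text \<open>The polynomial ring is an \<open>idom\<close> in the library only for linearly ordered variables, so this
  is shown by hand: compare coefficients at \<open>x\<^sub>j \<mu>\<^sub>0\<close>, where \<open>\<mu>\<^sub>0\<close> is a monomial of \<open>h\<close> with
  maximal exponent of \<open>x\<^sub>j\<close>; only the term \<open>c\<^sub>j x\<^sub>j\<close> of the linear form reaches it.\<close>
lemma lin_form_mult_neq_0:
  fixes c :: "'n::finite \<Rightarrow> 'k::idom"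
  assumes cj: "c j \<noteq> 0" and h: "h \<noteq> 0"
  shows "lin_form c * h \<noteq> 0"
proof -
  define M where "M = Max ((\<lambda>\<mu>. lookup \<mu> j) ` keys h)"
  obtain \<mu>\<^sub>0 where \<mu>\<^sub>0: "\<mu>\<^sub>0 \<in> keys h" "lookup \<mu>\<^sub>0 j = M"
    using Max_in[of "(\<lambda>\<mu>. lookup \<mu> j) ` keys h"] h unfolding M_def by fastforce
  have M_max: "\<mu> \<in> keys h \<Longrightarrow> lookup \<mu> j \<le> M" for \<mu>
    unfolding M_def by simp
  define \<nu> where "\<nu> = single j 1 + \<mu>\<^sub>0"
  have "lookup (single (single i 1) (c i) * h) \<nu> = 0" if "i \<noteq> j" for i
  proof (rule lookup_single_mult_eq_0)
    fix \<mu> assume "\<nu> = single i 1 + \<mu>"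
    then have "lookup \<mu> j = Suc M"
      using that \<mu>\<^sub>0(2) by (auto simp: \<nu>_def poly_mapping_eq_iff lookup_add lookup_single fun_eq_iff
          dest: spec[of _ j])
    then show "lookup h \<mu> = 0" using M_max by (fastforce simp: in_keys_iff)
  qed
  then have "lookup (lin_form c * h) \<nu> = (\<Sum>i\<in>UNIV. if i = j then c j * lookup h \<mu>\<^sub>0 else 0)"
    unfolding lin_form_eq_sum_single sum_distrib_right lookup_sum
    by (intro sum.cong) (auto simp: \<nu>_def lookup_single_mult_shift)
  also have "\<dots> \<noteq> 0"
    using cj \<mu>\<^sub>0(1) by (simp add: in_keys_iff)
  finally show ?thesis by auto
qed

lemma lin_form_power_mult_neq_0:
  fixes c :: "'n::finite \<Rightarrow> 'k::idom"
  assumes "c j \<noteq> 0" and "h \<noteq> 0"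
  shows "lin_form c ^ k * h \<noteq> 0"
  using assms(2) by (induction k) (simp_all add: mult.assoc lin_form_mult_neq_0[of c j, OF assms(1)])

section \<open>Modules of multiarrangement derivations\<close>

definition lin_comb :: "('i::finite \<Rightarrow> 'a::comm_semiring_1) \<Rightarrow> ('i \<Rightarrow> 'j \<Rightarrow> 'a) \<Rightarrow> 'j \<Rightarrow> 'a" where
  "lin_comb u \<theta> = (\<lambda>j. \<Sum>k\<in>UNIV. u k * \<theta> k j)"

lemma lin_comb_add: "lin_comb u \<theta> j + lin_comb v \<theta> j = lin_comb (\<lambda>k. u k + v k) \<theta> j"
  by (simp add: lin_comb_def algebra_simps sum.distrib)

lemma lin_comb_diff:
  "lin_comb u \<theta> j - lin_comb v \<theta> j = lin_comb (\<lambda>k. u k - v k) \<theta> j"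
  for u :: "'i::finite \<Rightarrow> 'a::comm_ring_1"
  by (simp add: lin_comb_def algebra_simps sum_subtractf)

lemma lin_comb_mult: "c * lin_comb u \<theta> j = lin_comb (\<lambda>k. c * u k) \<theta> j"
  by (simp add: lin_comb_def algebra_simps sum_distrib_left)

lemma lin_comb_sum: "(\<Sum>d\<in>S. lin_comb (u d) \<theta> j) = lin_comb (\<lambda>k. \<Sum>d\<in>S. u d k) \<theta> j"
  by (simp add: lin_comb_def sum_distrib_right sum.swap[of _ S])

lemma lin_comb_0: "lin_comb (\<lambda>k. 0) \<theta> = (\<lambda>j. 0)"
  by (simp add: lin_comb_def)

lemma of_int_mpoly_lin_comb:
  "of_int_mpoly (lin_comb u \<theta> j) = lin_comb (\<lambda>k. of_int_mpoly (u k)) (\<lambda>k j. of_int_mpoly (\<theta> k j)) j"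
  by (simp add: lin_comb_def of_int_mpoly_sum)

lemma apply_deriv_lin_form: "apply_deriv f (lin_form c) = (\<Sum>j\<in>UNIV. mp_const (c j) * f j)"
  by (simp add: apply_deriv_def mp_pderiv_lin_form mult.commute)

lemma apply_deriv_lin_comb: "apply_deriv (lin_comb u \<theta>) q = (\<Sum>k\<in>UNIV. u k * apply_deriv (\<theta> k) q)"
  unfolding apply_deriv_def lin_comb_def
  by (simp add: sum_distrib_left sum_distrib_right mult.assoc) (rule sum.swap)

lemma apply_deriv_diff: "apply_deriv (\<lambda>j. f j - g j) q = apply_deriv f q - apply_deriv g q"
  by (simp add: apply_deriv_def algebra_simps sum_subtractf)

lemma apply_deriv_mult: "apply_deriv (\<lambda>j. h * f j) q = h * apply_deriv f q"
  by (simp add: apply_deriv_def algebra_simps sum_distrib_left)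

lemma hom_component_apply_deriv_lin_form:
  "hom_component d (apply_deriv f (lin_form c)) = apply_deriv (\<lambda>j. hom_component d (f j)) (lin_form c)"
  unfolding apply_deriv_lin_form hom_component_sum
  by (simp add: mult.commute[of "mp_const _"] hom_component_mult_homogeneous[OF homogeneous_of_deg_mp_const])

lemma of_int_mpoly_apply_deriv_lin_form:
  "of_int_mpoly (apply_deriv f (lin_form c)) =
    apply_deriv (\<lambda>j. of_int_mpoly (f j)) (lin_form (\<lambda>k. of_int (c k)))"
  by (simp add: apply_deriv_lin_form of_int_mpoly_sum)

lemma ker_phi_Z_eq_deriv_module: "ker_phi_Z n a m = deriv_module n (a :: nat \<Rightarrow> 'n::finite \<Rightarrow> int) m"
  unfolding ker_phi_Z_def deriv_module_def
proof (intro Collect_cong)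
  fix g
  have "(\<Sum>j\<in>UNIV. mp_pderiv j (lin_form c) * g j) = apply_deriv g (lin_form c)" for c :: "'n \<Rightarrow> int"
    by (simp add: apply_deriv_def mult.commute)
  moreover have "(\<exists>h. \<forall>i<n. X i = h i * Y i) \<longleftrightarrow> (\<forall>i<n. Y i dvd X i)" for X Y :: "nat \<Rightarrow> ('n, int) mpoly"
  proof
    assume "\<forall>i<n. Y i dvd X i"
    then have "\<forall>i. \<exists>h. i < n \<longrightarrow> X i = h * Y i" by (metis dvd_def mult.commute)
    then show "\<exists>h. \<forall>i<n. X i = h i * Y i" by metis
  qed auto
  ultimately show "(\<exists>h. \<forall>i<n. (\<Sum>j\<in>UNIV. mp_pderiv j (lin_form (a i)) * g j) = h i * lin_form (a i) ^ m i)
      \<longleftrightarrow> (\<forall>i<n. lin_form (a i) ^ m i dvd apply_deriv g (lin_form (a i)))"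
    by presburger
qed

lemma lin_comb_in_deriv_module:
  "(\<And>k. \<theta> k \<in> deriv_module n b m) \<Longrightarrow> lin_comb u \<theta> \<in> deriv_module n b m"
  unfolding deriv_module_def by (auto simp: apply_deriv_lin_comb intro!: dvd_sum dvd_mult)

lemma diff_in_deriv_module:
  "f \<in> deriv_module n b m \<Longrightarrow> g \<in> deriv_module n b m \<Longrightarrow> (\<lambda>j. f j - g j) \<in> deriv_module n b m"
  unfolding deriv_module_def by (auto simp: apply_deriv_diff)

lemma hom_component_in_deriv_module:
  assumes "f \<in> deriv_module n b m"
  shows "(\<lambda>j. hom_component d (f j)) \<in> deriv_module n b m"
  unfolding deriv_module_def
proof (intro CollectI allI impI)
  fix i assume "i < n"
  then obtain h where h: "apply_deriv f (lin_form (b i)) = h * lin_form (b i) ^ m i"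
    using assms by (auto simp: deriv_module_def mult.commute elim!: dvdE)
  have "homogeneous_of_deg (m i * 1) (lin_form (b i) ^ m i)"
    by (intro homogeneous_of_deg_power homogeneous_lin_form)
  then show "lin_form (b i) ^ m i dvd apply_deriv (\<lambda>j. hom_component d (f j)) (lin_form (b i))"
    by (simp add: hom_component_apply_deriv_lin_form[symmetric] h hom_component_mult_homogeneous)
qed

lemma of_int_mpoly_in_deriv_module:
  assumes "f \<in> deriv_module n a m"
  shows "(\<lambda>j. of_int_mpoly (f j)) \<in> deriv_module n (\<lambda>i k. of_int (a i k)) m"
  unfolding deriv_module_def
proof (intro CollectI allI impI)
  fix i assume "i < n"
  then obtain h where "apply_deriv f (lin_form (a i)) = lin_form (a i) ^ m i * h"
    using assms by (auto simp: deriv_module_def elim!: dvdE)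
  then have "apply_deriv (\<lambda>j. of_int_mpoly (f j)) (lin_form (\<lambda>k. of_int (a i k))) =
      lin_form (\<lambda>k. of_int (a i k)) ^ m i * of_int_mpoly h"
    by (simp add: of_int_mpoly_apply_deriv_lin_form[symmetric] of_int_mpoly_lin_form)
  then show "lin_form (\<lambda>k. of_int (a i k)) ^ m i dvd
      apply_deriv (\<lambda>j. of_int_mpoly (f j)) (lin_form (\<lambda>k. of_int (a i k)))"
    by (rule dvdI)
qed

section \<open>Reduction modulo \<open>p\<close>\<close>

lemma of_int_mpoly_mod_ring_eq_0D:
  assumes "(of_int_mpoly f :: ('n::finite, 'p::prime_card mod_ring) mpoly) = 0"
  shows "f = mp_const (int CARD('p)) * Poly_Mapping.map (\<lambda>x. x div int CARD('p)) f"
proof (rule poly_mapping_eqI)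
  fix \<mu>
  have "(of_int (lookup f \<mu>) :: 'p mod_ring) = 0"
    using arg_cong[OF assms, of "\<lambda>F. lookup F \<mu>"] by simp
  then have "int CARD('p) dvd lookup f \<mu>"
    by (simp add: of_int_eq_0_iff_char_dvd)
  then show "lookup f \<mu> = lookup (mp_const (int CARD('p)) * Poly_Mapping.map (\<lambda>x. x div int CARD('p)) f) \<mu>"
    by (simp add: lookup_mp_const_mult lookup_map)
qed

definition lift_mod_ring :: "('a \<Rightarrow>\<^sub>0 'p::prime_card mod_ring) \<Rightarrow> ('a \<Rightarrow>\<^sub>0 int)" where
  "lift_mod_ring = Poly_Mapping.map to_int_mod_ring"

lemma lookup_lift_mod_ring: "lookup (lift_mod_ring F) \<mu> = to_int_mod_ring (lookup F \<mu>)"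
  by (simp add: lift_mod_ring_def lookup_map)

lemma of_int_mpoly_lift_mod_ring [simp]: "of_int_mpoly (lift_mod_ring F) = F"
  by (rule poly_mapping_eqI) (simp add: lookup_lift_mod_ring of_int_of_int_mod_ring)

lemma lift_mod_ring_0 [simp]: "lift_mod_ring 0 = 0"
  by (rule poly_mapping_eqI) (simp add: lookup_lift_mod_ring)

lemma keys_lift_mod_ring: "keys (lift_mod_ring F) \<subseteq> keys F"
  by (auto simp: in_keys_iff lookup_lift_mod_ring)

lemma lookup_lift_mod_ring_bounds:
  "0 \<le> lookup (lift_mod_ring F) \<mu> \<and> lookup (lift_mod_ring F) \<mu> < int CARD('p)"
  for F :: "'a \<Rightarrow>\<^sub>0 'p::prime_card mod_ring"
  using range_to_int_mod_ring[where 'a='p] by (auto simp: lookup_lift_mod_ring)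

text \<open>Reducing \<open>p f = l\<^sup>r h\<close> modulo \<open>p\<close> gives \<open>0 = l\<^sup>r h\<close> over \<open>\<bbbF>\<^sub>p\<close>, where \<open>l \<noteq> 0\<close>; hence \<open>p\<close> divides \<open>h\<close>.\<close>
lemma homogeneous_of_deg_lift_mod_ring:
  "homogeneous_of_deg d F \<Longrightarrow> homogeneous_of_deg d (lift_mod_ring F)"
  by (erule homogeneous_of_deg_subset_keys) (rule keys_lift_mod_ring)

lemma lin_form_power_dvd_cancel_prime:
  fixes c :: "'n::finite \<Rightarrow> int"
  assumes cj: "(of_int (c j) :: 'p::prime_card mod_ring) \<noteq> 0"
    and dvd: "lin_form c ^ r dvd mp_const (int CARD('p)) * f"
  shows "lin_form c ^ r dvd f"
proof -
  obtain h where h: "mp_const (int CARD('p)) * f = lin_form c ^ r * h"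
    using dvd by (elim dvdE)
  have "(of_int_mpoly h :: ('n, 'p mod_ring) mpoly) = 0"
  proof (rule ccontr)
    assume "(of_int_mpoly h :: ('n, 'p mod_ring) mpoly) \<noteq> 0"
    with cj have "lin_form (\<lambda>k. of_int (c k) :: 'p mod_ring) ^ r * of_int_mpoly h \<noteq> 0"
      by (rule lin_form_power_mult_neq_0[where c = "\<lambda>k. of_int (c k)"])
    moreover have "(of_int_mpoly (mp_const (int CARD('p)) * f) :: ('n, 'p mod_ring) mpoly) = 0"
      by simp
    ultimately show False
      by (simp add: h of_int_mpoly_lin_form)
  qed
  then have h': "h = mp_const (int CARD('p)) * Poly_Mapping.map (\<lambda>x. x div int CARD('p)) h"
    by (rule of_int_mpoly_mod_ring_eq_0D)
  define h' where "h' = Poly_Mapping.map (\<lambda>x. x div int CARD('p)) h"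
  have "mp_const (int CARD('p)) * f = mp_const (int CARD('p)) * (lin_form c ^ r * h')"
    using h h' unfolding h'_def[symmetric] by (simp add: mult.left_commute)
  then show ?thesis
    by (simp add: mp_const_mult_left_cancel)
qed

lemma deriv_module_cancel_prime:
  assumes "(\<lambda>j. mp_const (int CARD('p)) * f j) \<in> deriv_module n a m"
    and "\<And>i. i < n \<Longrightarrow> \<exists>j. (of_int (a i j) :: 'p::prime_card mod_ring) \<noteq> 0"
  shows "f \<in> deriv_module n a m"
  unfolding deriv_module_def
proof (intro CollectI allI impI)
  fix i assume "i < n"
  obtain j where "(of_int (a i j) :: 'p mod_ring) \<noteq> 0"
    using assms(2)[OF \<open>i < n\<close>] by (elim exE)
  moreover have "lin_form (a i) ^ m i dvd mp_const (int CARD('p)) * apply_deriv f (lin_form (a i))"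
    using assms(1) \<open>i < n\<close> by (simp add: deriv_module_def apply_deriv_mult)
  ultimately show "lin_form (a i) ^ m i dvd apply_deriv f (lin_form (a i))"
    by (rule lin_form_power_dvd_cancel_prime[where c = "a i" and j = j])
qed

section \<open>Coefficient bounds and denominators\<close>

lemma finite_bounded_int_poly_mappings:
  assumes "finite M"
  shows "finite {f :: 'a \<Rightarrow>\<^sub>0 int. keys f \<subseteq> M \<and> (\<forall>\<mu>. \<bar>lookup f \<mu>\<bar> \<le> B)}"
    (is "finite ?A")
proof -
  have "(\<lambda>f. restrict (lookup f) M) ` ?A \<subseteq> PiE M (\<lambda>_. {-B..B})"
    by (auto simp: abs_le_iff minus_le_iff)
  then have "finite ((\<lambda>f. restrict (lookup f) M) ` ?A)"
    by (rule finite_subset) (simp add: finite_PiE assms)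
  moreover have "inj_on (\<lambda>f. restrict (lookup f) M) ?A"
  proof (rule inj_onI, rule poly_mapping_eqI)
    fix f g \<mu>
    assume "f \<in> ?A" "g \<in> ?A" and eq: "restrict (lookup f) M = restrict (lookup g) M"
    then have "\<mu> \<notin> M \<Longrightarrow> \<mu> \<notin> keys f \<and> \<mu> \<notin> keys g" by auto
    then show "lookup f \<mu> = lookup g \<mu>"
      using fun_cong[OF eq, of \<mu>] by (cases "\<mu> \<in> M") (simp_all add: in_keys_iff)
  qed
  ultimately show ?thesis by (rule finite_imageD)
qed

definition bounded_homog_vectors :: "('j \<Rightarrow> nat) \<Rightarrow> int \<Rightarrow> ('j \<Rightarrow> ('n::finite, int) mpoly) set" where
  "bounded_homog_vectors d B = {\<Delta>. \<forall>j. homogeneous_of_deg (d j) (\<Delta> j) \<and> (\<forall>\<mu>. \<bar>lookup (\<Delta> j) \<mu>\<bar> \<le> B)}"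

lemma finite_bounded_homog_vectors: "finite (bounded_homog_vectors d B :: ('j::finite \<Rightarrow> _) set)"
proof -
  have "bounded_homog_vectors d B \<subseteq>
      PiE UNIV (\<lambda>j. {f. keys f \<subseteq> {\<mu>. mono_deg \<mu> = d j} \<and> (\<forall>\<mu>. \<bar>lookup f \<mu>\<bar> \<le> B)})"
    by (auto simp: bounded_homog_vectors_def homogeneous_of_deg_iff_keys PiE_UNIV_domain)
  then show ?thesis
    by (rule finite_subset) (intro finite_PiE finite_bounded_int_poly_mappings finite_mono_deg_eq; simp)
qed

text \<open>The condition \<open>d < e k \<longrightarrow> c k = 0\<close> compensates for the truncated subtraction \<open>d - e k\<close>.\<close>
definition digit_vectors :: "('j \<Rightarrow> nat) \<Rightarrow> nat \<Rightarrow> int \<Rightarrow> ('j \<Rightarrow> ('n::finite, int) mpoly) set" where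
  "digit_vectors e d B = {c \<in> bounded_homog_vectors (\<lambda>k. d - e k) B. \<forall>k. d < e k \<longrightarrow> c k = 0}"

lemma finite_digit_vectors: "finite (digit_vectors e d B :: ('j::finite \<Rightarrow> _) set)"
  unfolding digit_vectors_def by (rule finite_subset[OF _ finite_bounded_homog_vectors]) blast

lemma int_poly_mappings_coeff_bound:
  assumes "finite A"
  shows "\<exists>K\<ge>0. \<forall>x\<in>A. \<forall>\<mu>. \<bar>lookup (f x) \<mu>\<bar> \<le> (K :: int)"
proof (intro exI conjI ballI allI)
  let ?K = "\<Sum>x\<in>A. \<Sum>\<mu>\<in>keys (f x). \<bar>lookup (f x) \<mu>\<bar>"
  show "0 \<le> ?K" by (intro sum_nonneg abs_ge_zero)
  fix x \<mu> assume "x \<in> A"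
  show "\<bar>lookup (f x) \<mu>\<bar> \<le> ?K"
  proof (cases "\<mu> \<in> keys (f x)")
    case True
    then have "\<bar>lookup (f x) \<mu>\<bar> \<le> (\<Sum>\<mu>\<in>keys (f x). \<bar>lookup (f x) \<mu>\<bar>)" by (intro member_le_sum) auto
    also have "\<dots> \<le> ?K" using \<open>x \<in> A\<close> assms by (intro member_le_sum sum_nonneg) auto
    finally show ?thesis .
  next
    case False
    then show ?thesis using \<open>0 \<le> ?K\<close> by (simp add: in_keys_iff)
  qed
qed

lemma expansion_remainder_bound:
  fixes x :: "nat \<Rightarrow> int"
  assumes p: "2 \<le> p" and K: "0 \<le> K" and digit: "\<And>N. \<bar>x N - p * x (Suc N)\<bar> \<le> K"
  shows "\<bar>x N\<bar> \<le> max (K + 1) (\<bar>x 0\<bar> - int N)"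
proof (induction N)
  case (Suc N)
  have "2 * \<bar>x (Suc N)\<bar> \<le> p * \<bar>x (Suc N)\<bar>" using p by (intro mult_right_mono) auto
  also have "\<dots> \<le> \<bar>x N\<bar> + K" using digit[of N] p by (simp add: abs_mult)
  finally show ?case using Suc.IH K by (simp add: max_def split: if_splits)
qed simp

lemma dvd_all_powers_imp_eq_0:
  fixes x p :: int
  assumes "2 \<le> p" and dvd: "\<And>N. p ^ N dvd x"
  shows "x = 0"
proof (rule ccontr)
  assume "x \<noteq> 0"
  have "\<bar>x\<bar> < 2 ^ nat \<bar>x\<bar>"
    using less_exp[of "nat \<bar>x\<bar>"] by (metis abs_ge_zero int_nat_eq of_nat_less_iff of_nat_numeral of_nat_power)
  also have "\<dots> \<le> p ^ nat \<bar>x\<bar>" using assms(1) by (intro power_mono) auto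
  also have "\<dots> \<le> \<bar>x\<bar>" using dvd_imp_le_int[OF \<open>x \<noteq> 0\<close> dvd] assms(1) by simp
  finally show False by simp
qed

lemma rat_common_denominator:
  assumes "finite (X :: rat set)"
  shows "\<exists>D::int. 0 < D \<and> (\<forall>x\<in>X. of_int D * x \<in> \<int>)"
proof (intro exI conjI ballI)
  let ?den = "\<lambda>x. snd (quotient_of x)"
  show "0 < prod ?den X" by (intro prod_pos) (simp add: quotient_of_denom_pos')
  fix x assume "x \<in> X"
  have "of_int d * x = of_int n" if "quotient_of x = (n, d)" for n d
    using quotient_of_div[OF that] quotient_of_denom_pos[OF that] by simp
  then have "of_int (?den x) * x = of_int (fst (quotient_of x))"
    by simp
  moreover have "prod ?den X = prod ?den (X - {x}) * ?den x"
    using assms \<open>x \<in> X\<close> by (simp add: prod.remove mult.commute)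
  ultimately have "of_int (prod ?den X) * x = of_int (prod ?den (X - {x}) * fst (quotient_of x))"
    by (simp add: mult.assoc)
  then show "of_int (prod ?den X) * x \<in> \<int>" by (metis Ints_of_int)
qed

lemma mpoly_common_denominator:
  assumes "finite P"
  shows "\<exists>D::int. 0 < D \<and> (\<forall>p\<in>P. \<exists>q. mp_const (of_int D) * (p :: ('n, rat) mpoly) = of_int_mpoly q)"
proof -
  have "finite (\<Union>p\<in>P. lookup p ` keys p)" using assms by auto
  then obtain D :: int where D: "0 < D" "\<forall>x\<in>(\<Union>p\<in>P. lookup p ` keys p). of_int D * x \<in> \<int>"
    using rat_common_denominator by blast
  have "mp_const (of_int D) * p = of_int_mpoly (Poly_Mapping.map (\<lambda>x. \<lfloor>of_int D * x\<rfloor>) p)"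
    if "p \<in> P" for p
  proof (rule poly_mapping_eqI)
    fix \<mu>
    have "of_int D * lookup p \<mu> \<in> \<int>"
      using D(2) that by (cases "\<mu> \<in> keys p") (auto simp: in_keys_iff)
    then show "lookup (mp_const (of_int D) * p) \<mu> =
        lookup (of_int_mpoly (Poly_Mapping.map (\<lambda>x. \<lfloor>of_int D * x\<rfloor>) p)) \<mu>"
      by (simp add: lookup_mp_const_mult lookup_map)
  qed
  then show ?thesis using D(1) by blast
qed

section \<open>Periodic expansions\<close>

lemma lin_comb_telescope:
  fixes X :: "nat \<Rightarrow> 'j \<Rightarrow> 'a::comm_ring_1"
  assumes expand: "\<And>N. \<exists>u. \<forall>j. X N j = lin_comb u \<theta> j + c * X (Suc N) j"
  shows "\<exists>u. \<forall>j. X N j = lin_comb u \<theta> j + c ^ t * X (N + t) j"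
proof (induction t)
  case 0
  show ?case by (intro exI[of _ "\<lambda>_. 0"]) (simp add: lin_comb_def)
next
  case (Suc t)
  then obtain u where u: "\<forall>j. X N j = lin_comb u \<theta> j + c ^ t * X (N + t) j" by blast
  obtain v where v: "\<forall>j. X (N + t) j = lin_comb v \<theta> j + c * X (Suc (N + t)) j"
    using expand by blast
  have "X N j = lin_comb (\<lambda>k. u k + c ^ t * v k) \<theta> j + c ^ Suc t * X (N + Suc t) j" for j
    unfolding lin_comb_add[symmetric] lin_comb_mult[symmetric] using u v by (simp add: algebra_simps)
  then show ?case by blast
qed

text \<open>If the expansion \<open>X\<^sub>N = \<Sum> u\<^sub>k \<theta>\<^sub>k + c X\<^bsub>N+1\<^esub>\<close> repeats with period \<open>T\<close>, then \<open>X\<^sub>s\<close> is the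
  geometric series \<open>(1 - c\<^sup>T)\<^sup>-\<^sup>1 \<Sum>\<^bsub>N<T\<^esub> c\<^sup>N (\<dots>)\<close>, so no remainder is left.\<close>
lemma lin_comb_of_periodic_expansion:
  fixes X :: "nat \<Rightarrow> 'j \<Rightarrow> 'a::comm_ring_1"
  assumes expand: "\<And>N. \<exists>u. \<forall>j. X N j = lin_comb u \<theta> j + c * X (Suc N) j"
    and period: "X (s + T) = X s"
    and inverse: "w * (1 - c ^ T) = 1"
  shows "\<exists>u. X 0 = lin_comb u \<theta>"
proof -
  obtain u where u: "\<forall>j. X s j = lin_comb u \<theta> j + c ^ T * X (s + T) j"
    using lin_comb_telescope[of X \<theta> c, OF expand] by blast
  have X_s: "X s j = lin_comb (\<lambda>k. w * u k) \<theta> j" for j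
  proof -
    have "X s j = lin_comb u \<theta> j + c ^ T * X s j"
      using u period by metis
    have "(1 - c ^ T) * X s j = X s j - c ^ T * X s j"
      by (simp add: left_diff_distrib)
    also have "\<dots> = lin_comb u \<theta> j"
      by (subst (1) \<open>X s j = lin_comb u \<theta> j + c ^ T * X s j\<close>) simp
    finally have "(1 - c ^ T) * X s j = lin_comb u \<theta> j" .
    then have "X s j = w * lin_comb u \<theta> j"
      by (metis inverse mult.assoc mult_1)
    then show ?thesis by (simp add: lin_comb_mult)
  qed
  obtain v where "\<forall>j. X 0 j = lin_comb v \<theta> j + c ^ s * X (0 + s) j"
    using lin_comb_telescope[of X \<theta> c, OF expand] by blast
  then have "X 0 j = lin_comb (\<lambda>k. v k + c ^ s * (w * u k)) \<theta> j" for j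
    by (simp add: X_s lin_comb_mult lin_comb_add)
  then show ?thesis by blast
qed

lemma nat_seq_repeats:
  fixes f :: "nat \<Rightarrow> 'a"
  assumes "\<And>N. N0 \<le> N \<Longrightarrow> f N \<in> A" and "finite A"
  shows "\<exists>s T. 0 < T \<and> f (s + T) = f s"
proof -
  have "f ` {N0..} \<subseteq> A" using assms(1) by auto
  then have "finite (f ` {N0..})" using assms(2) by (rule finite_subset)
  then obtain s where "infinite {N \<in> {N0..}. f N = f s}"
    using pigeonhole_infinite[OF infinite_Ici] by blast
  then obtain N where "s < N" "f N = f s"
    unfolding infinite_nat_iff_unbounded by blast
  then show ?thesis
    by (intro exI[of _ s] exI[of _ "N - s"]) simp
qed

lemma deriv_module_clear_denominators:
  fixes a :: "nat \<Rightarrow> 'n::finite \<Rightarrow> int"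
  assumes "\<delta> \<in> deriv_module n (\<lambda>i k. of_int (a i k) :: rat) m"
  obtains D :: int and \<Delta> where "0 < D" "\<Delta> \<in> deriv_module n a m"
    "(\<lambda>j. of_int_mpoly (\<Delta> j)) = (\<lambda>j. mp_const (of_int D) * \<delta> j)"
proof -
  let ?L = "\<lambda>i. lin_form (\<lambda>k. of_int (a i k) :: rat)"
  have "\<forall>i. \<exists>h. i < n \<longrightarrow> apply_deriv \<delta> (?L i) = ?L i ^ m i * h"
    using assms by (auto simp: deriv_module_def elim!: dvdE)
  then obtain h where h: "\<And>i. i < n \<Longrightarrow> apply_deriv \<delta> (?L i) = ?L i ^ m i * h i"
    by metis
  obtain D where D: "0 < D" "\<forall>q\<in>range \<delta> \<union> h ` {..<n}. \<exists>v. mp_const (of_int D) * q = of_int_mpoly v"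
    using mpoly_common_denominator[of "range \<delta> \<union> h ` {..<n}"] by auto
  have "\<forall>j. \<exists>v. mp_const (of_int D) * \<delta> j = of_int_mpoly v"
    using D(2) by blast
  then obtain \<Delta> where \<Delta>: "\<And>j. mp_const (of_int D) * \<delta> j = of_int_mpoly (\<Delta> j)"
    by metis
  have "\<forall>i. \<exists>v. i < n \<longrightarrow> mp_const (of_int D) * h i = of_int_mpoly v"
    using D(2) by blast
  then obtain H where H: "\<And>i. i < n \<Longrightarrow> mp_const (of_int D) * h i = of_int_mpoly (H i)"
    by metis
  have \<Delta>_in: "\<Delta> \<in> deriv_module n a m"
    unfolding deriv_module_def
  proof (intro CollectI allI impI)
    fix i assume "i < n"
    have "of_int_mpoly (apply_deriv \<Delta> (lin_form (a i))) =
        apply_deriv (\<lambda>j. mp_const (of_int D) * \<delta> j) (?L i)"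
      by (simp add: of_int_mpoly_apply_deriv_lin_form \<Delta>)
    also have "\<dots> = ?L i ^ m i * (mp_const (of_int D) * h i)"
      by (simp add: apply_deriv_mult h[OF \<open>i < n\<close>] mult.left_commute)
    also have "\<dots> = (of_int_mpoly (lin_form (a i) ^ m i * H i) :: ('n, rat) mpoly)"
      by (simp add: H[OF \<open>i < n\<close>] of_int_mpoly_lin_form)
    finally have "apply_deriv \<Delta> (lin_form (a i)) = lin_form (a i) ^ m i * H i"
      by (simp only: of_int_mpoly_eq_iff)
    then show "lin_form (a i) ^ m i dvd apply_deriv \<Delta> (lin_form (a i))"
      by (rule dvdI)
  qed
  show thesis by (rule that[OF D(1) \<Delta>_in]) (simp add: \<Delta> fun_eq_iff)
qed

section \<open>Lifting a basis modulo \<open>p\<close>\<close>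

locale mod_p_basis_lift =
  fixes n :: nat and a :: "nat \<Rightarrow> 'n::finite \<Rightarrow> int" and m :: "nat \<Rightarrow> nat" and e :: "'n \<Rightarrow> nat"
    and g :: "'n \<Rightarrow> 'n \<Rightarrow> ('n, int) mpoly" and p_type :: "'p::prime_card itself"
  assumes g_in_deriv_module: "\<And>k. g k \<in> deriv_module n a m"
    and g_homogeneous: "\<And>k. homog_deriv (e k) (g k)"
    and basis_mod_p: "\<And>\<delta>. \<delta> \<in> deriv_module n (\<lambda>i k. of_int (a i k) :: 'p mod_ring) m \<Longrightarrow>
      \<exists>!u. \<delta> = lin_comb u (\<lambda>k j. of_int_mpoly (g k j))"
    and forms_mod_p: "\<And>i. i < n \<Longrightarrow> \<exists>j. (of_int (a i j) :: 'p mod_ring) \<noteq> 0"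
begin

abbreviation \<theta>\<^sub>p :: "'n \<Rightarrow> 'n \<Rightarrow> ('n, 'p mod_ring) mpoly" where
  "\<theta>\<^sub>p k j \<equiv> of_int_mpoly (g k j)"

abbreviation \<theta>\<^sub>Q :: "'n \<Rightarrow> 'n \<Rightarrow> ('n, rat) mpoly" where
  "\<theta>\<^sub>Q k j \<equiv> of_int_mpoly (g k j)"

lemma \<theta>\<^sub>p_homogeneous: "homogeneous_of_deg (e k) (\<theta>\<^sub>p k j)"
  using g_homogeneous by (simp add: homog_deriv_def homogeneous_of_deg_of_int_mpoly)

lemma lin_comb_\<theta>\<^sub>p_inj: "lin_comb u \<theta>\<^sub>p = lin_comb v \<theta>\<^sub>p \<Longrightarrow> u = v"
proof -
  assume eq: "lin_comb u \<theta>\<^sub>p = lin_comb v \<theta>\<^sub>p"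
  have "lin_comb v \<theta>\<^sub>p \<in> deriv_module n (\<lambda>i k. of_int (a i k) :: 'p mod_ring) m"
    by (intro lin_comb_in_deriv_module of_int_mpoly_in_deriv_module g_in_deriv_module)
  then have "\<exists>!w. lin_comb v \<theta>\<^sub>p = lin_comb w \<theta>\<^sub>p" by (rule basis_mod_p)
  then show "u = v" using eq by (metis (no_types))
qed

lemma homogeneous_lin_comb_digits:
  assumes "c \<in> digit_vectors e d (int CARD('p))"
  shows "homogeneous_of_deg d (lin_comb c g j)"
  unfolding lin_comb_def
proof (rule homogeneous_of_deg_sum)
  fix k
  show "homogeneous_of_deg d (c k * g k j)"
  proof (cases "e k \<le> d")
    case True
    have "homogeneous_of_deg (d - e k) (c k)"
      using assms by (simp add: digit_vectors_def bounded_homog_vectors_def)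
    moreover have "homogeneous_of_deg (e k) (g k j)"
      using g_homogeneous by (simp add: homog_deriv_def)
    ultimately have "homogeneous_of_deg (d - e k + e k) (c k * g k j)"
      by (rule homogeneous_of_deg_mult)
    then show ?thesis using True by simp
  qed (use assms in \<open>simp add: digit_vectors_def\<close>)
qed

lemma reduction_in_digit_span:
  assumes "\<Delta> \<in> deriv_module n a m" and "homog_deriv d \<Delta>"
  obtains c where "c \<in> digit_vectors e d (int CARD('p))"
    "(\<lambda>j. of_int_mpoly (\<Delta> j)) = lin_comb (\<lambda>k. of_int_mpoly (c k)) \<theta>\<^sub>p"
proof -
  obtain u where u: "(\<lambda>j. of_int_mpoly (\<Delta> j)) = lin_comb u \<theta>\<^sub>p"
    using basis_mod_p[OF of_int_mpoly_in_deriv_module[OF assms(1)]] by blast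
  define c' where "c' k = (if e k \<le> d then hom_component (d - e k) (u k) else 0)" for k
  define c where "c k = lift_mod_ring (c' k)" for k
  have red: "of_int_mpoly (\<Delta> j) = lin_comb (\<lambda>k. of_int_mpoly (c k)) \<theta>\<^sub>p j" for j
  proof -
    have "of_int_mpoly (\<Delta> j) = hom_component d (of_int_mpoly (\<Delta> j) :: ('n, 'p mod_ring) mpoly)"
      using assms(2) by (simp add: homog_deriv_def hom_component_homogeneous homogeneous_of_deg_of_int_mpoly)
    also have "\<dots> = hom_component d (lin_comb u \<theta>\<^sub>p j)"
      using fun_cong[OF u, of j] by simp
    also have "\<dots> = lin_comb c' \<theta>\<^sub>p j"
      unfolding lin_comb_def hom_component_sum c'_def
      by (intro sum.cong refl) (simp add: hom_component_mult_homogeneous[OF \<theta>\<^sub>p_homogeneous])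
    finally show ?thesis by (simp add: c_def)
  qed
  moreover have "c \<in> digit_vectors e d (int CARD('p))"
  proof -
    have "homogeneous_of_deg (d - e k) (c k)" for k
      by (simp add: c_def c'_def homogeneous_of_deg_lift_mod_ring homogeneous_hom_component)
    moreover have "\<bar>lookup (c k) \<mu>\<bar> \<le> int CARD('p)" for k \<mu>
      using lookup_lift_mod_ring_bounds[of "c' k" \<mu>] by (simp add: c_def)
    ultimately show ?thesis
      by (simp add: digit_vectors_def bounded_homog_vectors_def c_def c'_def)
  qed
  then show thesis using red by (intro that ext)
qed

lemma digit_step:
  assumes "\<Delta> \<in> deriv_module n a m" and "homog_deriv d \<Delta>"
  obtains c \<Delta>' where "c \<in> digit_vectors e d (int CARD('p))" "\<Delta>' \<in> deriv_module n a m" "homog_deriv d \<Delta>'"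
    "\<Delta> = (\<lambda>j. lin_comb c g j + mp_const (int CARD('p)) * \<Delta>' j)"
proof -
  obtain c where c: "c \<in> digit_vectors e d (int CARD('p))"
    and red: "(\<lambda>j. of_int_mpoly (\<Delta> j)) = lin_comb (\<lambda>k. of_int_mpoly (c k)) \<theta>\<^sub>p"
    by (rule reduction_in_digit_span[OF assms])
  define R where "R j = \<Delta> j - lin_comb c g j" for j
  define \<Delta>' where "\<Delta>' j = Poly_Mapping.map (\<lambda>x. x div int CARD('p)) (R j)" for j
  have R_eq: "R = (\<lambda>j. mp_const (int CARD('p)) * \<Delta>' j)"
  proof
    fix j
    have "(of_int_mpoly (R j) :: ('n, 'p mod_ring) mpoly) = 0"
      using fun_cong[OF red, of j] by (simp add: R_def of_int_mpoly_lin_comb)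
    then show "R j = mp_const (int CARD('p)) * \<Delta>' j"
      unfolding \<Delta>'_def by (rule of_int_mpoly_mod_ring_eq_0D)
  qed
  have "R \<in> deriv_module n a m"
    unfolding R_def using assms(1) lin_comb_in_deriv_module[OF g_in_deriv_module]
    by (rule diff_in_deriv_module)
  then have "\<Delta>' \<in> deriv_module n a m"
    unfolding R_eq by (rule deriv_module_cancel_prime) (rule forms_mod_p)
  moreover have "homogeneous_of_deg d (R j)" for j
    using assms(2) homogeneous_lin_comb_digits[OF c]
    by (simp add: R_def homog_deriv_def homogeneous_of_deg_diff)
  moreover have "keys (\<Delta>' j) \<subseteq> keys (R j)" for j
  proof
    fix \<mu> assume "\<mu> \<in> keys (\<Delta>' j)"
    moreover have "lookup (R j) \<mu> = int CARD('p) * lookup (\<Delta>' j) \<mu>"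
      by (simp add: R_eq lookup_mp_const_mult)
    ultimately show "\<mu> \<in> keys (R j)" by (simp add: in_keys_iff)
  qed
  ultimately have "homog_deriv d \<Delta>'"
    unfolding homog_deriv_def using homogeneous_of_deg_subset_keys by blast
  moreover have "\<Delta> = (\<lambda>j. lin_comb c g j + R j)"
    by (simp add: R_def)
  ultimately show thesis using c \<open>\<Delta>' \<in> deriv_module n a m\<close> by (intro that) (simp_all add: R_eq)
qed

lemma digit_expansion:
  assumes "\<Delta> \<in> deriv_module n a m" and "homog_deriv d \<Delta>"
  obtains D where "D 0 = \<Delta>" "\<forall>N. homog_deriv d (D N)"
    "\<forall>N. \<exists>c\<in>digit_vectors e d (int CARD('p)).
      \<forall>j. D N j = lin_comb c g j + mp_const (int CARD('p)) * D (Suc N) j"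
proof -
  let ?P = "\<lambda>(N::nat) \<Gamma>. \<Gamma> \<in> deriv_module n a m \<and> homog_deriv d \<Gamma> \<and> (N = 0 \<longrightarrow> \<Gamma> = \<Delta>)"
  let ?Q = "\<lambda>N \<Gamma> \<Gamma>'. \<exists>c\<in>digit_vectors e d (int CARD('p)). \<forall>j. \<Gamma> j = lin_comb c g j + mp_const (int CARD('p)) * \<Gamma>' j"
  have "\<exists>D. \<forall>N. ?P N (D N) \<and> ?Q N (D N) (D (Suc N))"
  proof (rule dependent_nat_choice)
    show "\<exists>\<Gamma>. ?P 0 \<Gamma>" using assms by auto
  next
    fix \<Gamma> N assume "?P N \<Gamma>"
    then have "\<Gamma> \<in> deriv_module n a m" "homog_deriv d \<Gamma>" by simp_all
    then obtain c \<Gamma>' where "c \<in> digit_vectors e d (int CARD('p))" "\<Gamma>' \<in> deriv_module n a m"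
        "homog_deriv d \<Gamma>'" "\<Gamma> = (\<lambda>j. lin_comb c g j + mp_const (int CARD('p)) * \<Gamma>' j)"
      by (rule digit_step)
    then show "\<exists>\<Gamma>'. ?P (Suc N) \<Gamma>' \<and> ?Q N \<Gamma> \<Gamma>'" by auto
  qed
  then obtain D where "\<And>N. ?P N (D N) \<and> ?Q N (D N) (D (Suc N))" by blast
  then show thesis by (intro that[of D]) simp_all
qed

lemma digit_expansion_repeats:
  assumes homog: "\<And>N. homog_deriv d (D N)"
    and expand: "\<And>N. \<exists>c\<in>digit_vectors e d (int CARD('p)).
      \<forall>j. D N j = lin_comb c g j + mp_const (int CARD('p)) * D (Suc N) j"
  shows "\<exists>s T. 0 < T \<and> D (s + T) = D s"
proof -
  have "finite (digit_vectors e d (int CARD('p)) \<times> (UNIV :: 'n set))"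
    by (simp add: finite_digit_vectors)
  then obtain K where "0 \<le> K" and K: "\<forall>x\<in>digit_vectors e d (int CARD('p)) \<times> UNIV.
      \<forall>\<mu>. \<bar>lookup (case x of (c, j) \<Rightarrow> lin_comb c g j) \<mu>\<bar> \<le> K"
    using int_poly_mappings_coeff_bound by blast
  obtain B where B: "\<forall>j\<in>UNIV. \<forall>\<mu>. \<bar>lookup (D 0 j) \<mu>\<bar> \<le> B"
    using int_poly_mappings_coeff_bound[of "UNIV :: 'n set" "D 0"] by auto
  have bound: "\<bar>lookup (D N j) \<mu>\<bar> \<le> max (K + 1) (B - int N)" for N j \<mu>
  proof -
    have "\<bar>lookup (D N j) \<mu>\<bar> \<le> max (K + 1) (\<bar>lookup (D 0 j) \<mu>\<bar> - int N)"
    proof (rule expansion_remainder_bound[where x = "\<lambda>N. lookup (D N j) \<mu>"])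
      show "2 \<le> int CARD('p)"
        using prime_card[where 'a = 'p] prime_ge_2_nat by simp
      show "0 \<le> K" by fact
      fix N
      from expand[of N] obtain c where "c \<in> digit_vectors e d (int CARD('p))"
        and "\<forall>j. D N j = lin_comb c g j + mp_const (int CARD('p)) * D (Suc N) j"
        by (elim bexE)
      then show "\<bar>lookup (D N j) \<mu> - int CARD('p) * lookup (D (Suc N) j) \<mu>\<bar> \<le> K"
        using K[rule_format, of "(c, j)"] by (simp add: lookup_add lookup_mp_const_mult)
    qed
    also have "\<dots> \<le> max (K + 1) (B - int N)"
      using B by (intro max.mono) auto
    finally show ?thesis .
  qed
  have "D N \<in> bounded_homog_vectors (\<lambda>_. d) (K + 1)" if "nat B \<le> N" for N
  proof -
    have "B - int N \<le> K + 1" using that \<open>0 \<le> K\<close> by (simp add: nat_le_iff)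
    then have "\<bar>lookup (D N j) \<mu>\<bar> \<le> K + 1" for j \<mu>
      using bound[of N j \<mu>] by simp
    then show ?thesis
      using homog[of N] by (simp add: bounded_homog_vectors_def homog_deriv_def)
  qed
  then show ?thesis
    by (rule nat_seq_repeats[OF _ finite_bounded_homog_vectors])
qed

lemma homogeneous_in_rat_span:
  assumes "\<Delta> \<in> deriv_module n a m" and "homog_deriv d \<Delta>"
  shows "\<exists>u. (\<lambda>j. of_int_mpoly (\<Delta> j)) = lin_comb u \<theta>\<^sub>Q"
proof -
  obtain D where "D 0 = \<Delta>" and homog: "\<forall>N. homog_deriv d (D N)"
    and expand: "\<forall>N. \<exists>c\<in>digit_vectors e d (int CARD('p)).
      \<forall>j. D N j = lin_comb c g j + mp_const (int CARD('p)) * D (Suc N) j"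
    by (rule digit_expansion[OF assms])
  obtain s T where "0 < T" and period: "D (s + T) = D s"
    using digit_expansion_repeats[of d D] homog expand by blast
  let ?X = "\<lambda>N j. of_int_mpoly (D N j) :: ('n, rat) mpoly"
  let ?p = "of_int (int CARD('p)) :: rat"
  have "\<exists>u. \<forall>j. ?X N j = lin_comb u \<theta>\<^sub>Q j + mp_const ?p * ?X (Suc N) j" for N
  proof -
    from expand[rule_format, of N] obtain c
      where "\<forall>j. D N j = lin_comb c g j + mp_const (int CARD('p)) * D (Suc N) j"
      by (elim bexE)
    then have "\<forall>j. ?X N j = lin_comb (\<lambda>k. of_int_mpoly (c k)) \<theta>\<^sub>Q j + mp_const ?p * ?X (Suc N) j"
      by (simp add: of_int_mpoly_lin_comb)
    then show ?thesis by blast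
  qed
  moreover have "?X (s + T) = ?X s" using period by simp
  moreover have "mp_const (inverse (1 - ?p ^ T)) * (1 - mp_const ?p ^ T) = 1"
  proof -
    have "2 \<le> CARD('p) ^ 1"
      using prime_card[where 'a = 'p] prime_ge_2_nat by simp
    also have "\<dots> \<le> CARD('p) ^ T"
      using \<open>0 < T\<close> by (intro power_increasing) auto
    finally have "CARD('p) ^ T \<noteq> 1" by linarith
    then have "(of_nat (CARD('p) ^ T) :: rat) \<noteq> 1" by (simp only: of_nat_eq_1_iff not_False_eq_True)
    then have "1 - ?p ^ T \<noteq> 0" by simp
    moreover have "1 - mp_const ?p ^ T = mp_const (1 - ?p ^ T)"
      by (simp add: mp_const_diff mp_const_power)
    ultimately show ?thesis
      by (metis mp_const_mult_inverse mult.commute)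
  qed
  ultimately have "\<exists>u. ?X 0 = lin_comb u \<theta>\<^sub>Q"
    by (rule lin_comb_of_periodic_expansion)
  then show ?thesis using \<open>D 0 = \<Delta>\<close> by simp
qed

lemma in_rat_span:
  assumes "\<Delta> \<in> deriv_module n a m"
  shows "\<exists>u. (\<lambda>j. of_int_mpoly (\<Delta> j)) = lin_comb u \<theta>\<^sub>Q"
proof -
  have "\<forall>d. \<exists>u. (\<lambda>j. of_int_mpoly (hom_component d (\<Delta> j))) = lin_comb u \<theta>\<^sub>Q"
  proof
    fix d
    show "\<exists>u. (\<lambda>j. of_int_mpoly (hom_component d (\<Delta> j))) = lin_comb u \<theta>\<^sub>Q"
      by (rule homogeneous_in_rat_span[where d = d])
        (simp_all add: hom_component_in_deriv_module[OF assms] homog_deriv_def homogeneous_hom_component)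
  qed
  then obtain u where u: "\<forall>d. (\<lambda>j. of_int_mpoly (hom_component d (\<Delta> j))) = lin_comb (u d) \<theta>\<^sub>Q"
    by (rule choice[THEN exE])
  define degs where "degs = (\<Union>j. mono_deg ` keys (\<Delta> j))"
  have "of_int_mpoly (\<Delta> j) = lin_comb (\<lambda>k. \<Sum>d\<in>degs. u d k) \<theta>\<^sub>Q j" for j
  proof -
    have "\<Delta> j = (\<Sum>d\<in>degs. hom_component d (\<Delta> j))"
      by (rule sum_hom_components[symmetric]) (auto simp: degs_def)
    then have "of_int_mpoly (\<Delta> j) = (\<Sum>d\<in>degs. of_int_mpoly (hom_component d (\<Delta> j)))"
      by (metis of_int_mpoly_sum)
    also have "\<dots> = (\<Sum>d\<in>degs. lin_comb (u d) \<theta>\<^sub>Q j)"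
      using u by (simp add: fun_eq_iff)
    also have "\<dots> = lin_comb (\<lambda>k. \<Sum>d\<in>degs. u d k) \<theta>\<^sub>Q j"
      by (rule lin_comb_sum)
    finally show ?thesis .
  qed
  then show ?thesis by blast
qed

text \<open>A relation \<open>\<Sum> v\<^sub>k g\<^sub>k = 0\<close> reduces to a relation among the basis \<open>\<theta>\<^sub>p\<close>, so \<open>p\<close> divides
  all \<open>v\<^sub>k\<close>; dividing by \<open>p\<close> and repeating shows that every power of \<open>p\<close> divides them.\<close>
lemma lin_comb_g_eq_0D:
  assumes "lin_comb v g = (\<lambda>j. 0)"
  shows "v = (\<lambda>k. 0)"
proof -
  let ?p = "int CARD('p)"
  have "\<forall>v. lin_comb v g = (\<lambda>j. 0) \<longrightarrow> (\<forall>k \<mu>. ?p ^ N dvd lookup (v k) \<mu>)" for N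
  proof (induction N)
    case (Suc N)
    show ?case
    proof (intro allI impI)
      fix v k \<mu> assume v: "lin_comb v g = (\<lambda>j. 0)"
      have "lin_comb (\<lambda>k. of_int_mpoly (v k)) \<theta>\<^sub>p = lin_comb (\<lambda>k. 0) \<theta>\<^sub>p"
        using v by (simp add: fun_eq_iff of_int_mpoly_lin_comb[symmetric] lin_comb_0)
      then have "(\<lambda>k. of_int_mpoly (v k) :: ('n, 'p mod_ring) mpoly) = (\<lambda>k. 0)"
        by (rule lin_comb_\<theta>\<^sub>p_inj)
      then have red: "(of_int_mpoly (v k) :: ('n, 'p mod_ring) mpoly) = 0" for k
        by (simp add: fun_eq_iff)
      define w where "w k = Poly_Mapping.map (\<lambda>x. x div ?p) (v k)" for k
      have v_eq: "v = (\<lambda>k. mp_const ?p * w k)"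
        unfolding w_def by (rule ext) (rule of_int_mpoly_mod_ring_eq_0D[OF red])
      have "mp_const ?p * lin_comb w g j = 0" for j
        using v by (simp add: v_eq lin_comb_mult fun_eq_iff)
      then have "lin_comb w g = (\<lambda>j. 0)"
        by (simp add: fun_eq_iff mp_const_mult_eq_0_iff)
      then have "?p ^ N dvd lookup (w k) \<mu>" using Suc.IH by blast
      then show "?p ^ Suc N dvd lookup (v k) \<mu>"
        by (simp add: v_eq lookup_mp_const_mult)
    qed
  qed simp
  then have "lookup (v k) \<mu> = 0" for k \<mu>
    using assms prime_card[where 'a = 'p] prime_ge_2_nat
    by (intro dvd_all_powers_imp_eq_0[of ?p]) auto
  then show ?thesis by (simp add: fun_eq_iff poly_mapping_eq_iff)
qed

lemma lin_comb_\<theta>\<^sub>Q_inj: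
  assumes eq: "lin_comb u \<theta>\<^sub>Q = lin_comb u' \<theta>\<^sub>Q"
  shows "u = u'"
proof -
  define w where "w k = u k - u' k" for k
  obtain D :: int where "0 < D" and "\<forall>q\<in>range w. \<exists>v. mp_const (of_int D) * q = of_int_mpoly v"
    using mpoly_common_denominator[of "range w"] by auto
  then have "\<forall>k. \<exists>v. mp_const (of_int D) * w k = of_int_mpoly v"
    by simp
  then obtain V where V: "\<And>k. mp_const (of_int D) * w k = of_int_mpoly (V k)"
    by metis
  have "of_int_mpoly (lin_comb V g j) = (of_int_mpoly 0 :: ('n, rat) mpoly)" for j
  proof -
    have "of_int_mpoly (lin_comb V g j) = lin_comb (\<lambda>k. mp_const (of_int D) * w k) \<theta>\<^sub>Q j"
      by (simp add: of_int_mpoly_lin_comb V)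
    also have "\<dots> = mp_const (of_int D) * (lin_comb u \<theta>\<^sub>Q j - lin_comb u' \<theta>\<^sub>Q j)"
      by (simp add: lin_comb_mult lin_comb_diff w_def)
    finally show ?thesis using eq by simp
  qed
  then have "lin_comb V g = (\<lambda>j. 0)"
    by (simp add: fun_eq_iff)
  then have "V = (\<lambda>k. 0)"
    by (rule lin_comb_g_eq_0D)
  then have "mp_const (of_int D) * w k = 0" for k
    using V by simp
  then have "w k = 0" for k
    using \<open>0 < D\<close> by (simp add: mp_const_mult_eq_0_iff)
  then show ?thesis by (simp add: w_def fun_eq_iff)
qed

lemma deriv_module_in_rat_span:
  assumes "\<delta> \<in> deriv_module n (\<lambda>i k. of_int (a i k) :: rat) m"
  shows "\<exists>u. \<delta> = lin_comb u \<theta>\<^sub>Q"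
proof -
  obtain D :: int and \<Delta> where "0 < D" "\<Delta> \<in> deriv_module n a m"
    and \<Delta>: "(\<lambda>j. of_int_mpoly (\<Delta> j)) = (\<lambda>j. mp_const (of_int D) * \<delta> j)"
    by (rule deriv_module_clear_denominators[OF assms])
  then obtain u where u: "(\<lambda>j. of_int_mpoly (\<Delta> j)) = lin_comb u \<theta>\<^sub>Q"
    using in_rat_span by blast
  have "\<delta> j = lin_comb (\<lambda>k. mp_const (inverse (of_int D)) * u k) \<theta>\<^sub>Q j" for j
  proof -
    have "\<delta> j = mp_const (inverse (of_int D)) * (mp_const (of_int D) * \<delta> j)"
      using \<open>0 < D\<close> by (simp add: mult.assoc[symmetric] mp_const_mult[symmetric])
    also have "\<dots> = mp_const (inverse (of_int D)) * lin_comb u \<theta>\<^sub>Q j"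
      using fun_cong[OF u, of j] fun_cong[OF \<Delta>, of j] by simp
    finally show ?thesis by (simp add: lin_comb_mult)
  qed
  then show ?thesis by blast
qed

theorem free_over_rat: "free_with_exponents n (\<lambda>i k. of_int (a i k) :: rat) m e"
  unfolding free_with_exponents_def lin_comb_def[symmetric]
proof (intro exI conjI allI ballI)
  fix k
  show "\<theta>\<^sub>Q k \<in> deriv_module n (\<lambda>i k. of_int (a i k)) m"
    by (rule of_int_mpoly_in_deriv_module[OF g_in_deriv_module])
  show "homog_deriv (e k) (\<theta>\<^sub>Q k)"
    using g_homogeneous by (simp add: homog_deriv_def homogeneous_of_deg_of_int_mpoly)
next
  fix \<delta> :: "'n \<Rightarrow> ('n, rat) mpoly"
  assume "\<delta> \<in> deriv_module n (\<lambda>i k. of_int (a i k)) m"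
  then obtain u where "\<delta> = lin_comb u \<theta>\<^sub>Q"
    using deriv_module_in_rat_span by blast
  then show "\<exists>!u. \<delta> = lin_comb u \<theta>\<^sub>Q"
    using lin_comb_\<theta>\<^sub>Q_inj by auto
qed

end

theorem theorem4p2:
  fixes n :: nat
    and a :: "nat \<Rightarrow> 'n::finite \<Rightarrow> int"
    and m :: "nat \<Rightarrow> nat"
    and e :: "'n \<Rightarrow> nat"
  assumes distinct_hyps: "\<forall>i<n. \<forall>j<n. i \<noteq> j \<longrightarrow>
             {x :: 'n \<Rightarrow> rat. (\<Sum>k\<in>UNIV. of_int (a i k) * x k) = 0}
           \<noteq> {x :: 'n \<Rightarrow> rat. (\<Sum>k\<in>UNIV. of_int (a j k) * x k) = 0}"
    and primitive: "\<forall>i<n. \<forall>q::int. prime q \<longrightarrow> \<not> (\<forall>k. q dvd a i k)"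
    and good: "good_prime TYPE('p::prime_card) n a"
    and surj: "\<forall>\<delta>\<in>deriv_module n (\<lambda>i k. (of_int (a i k) :: 'p mod_ring)) m.
                 \<exists>g\<in>ker_phi_Z n a m. red_p_vec g = \<delta>"
    and free_p: "free_with_exponents n (\<lambda>i k. (of_int (a i k) :: 'p mod_ring)) m e"
  shows "free_with_exponents n (\<lambda>i k. (of_int (a i k) :: rat)) m e"
proof -
  let ?D\<^sub>p = "deriv_module n (\<lambda>i k. of_int (a i k) :: 'p mod_ring) m"
  obtain \<theta> :: "'n \<Rightarrow> 'n \<Rightarrow> ('n, 'p mod_ring) mpoly"
    where \<theta>: "\<forall>k. \<theta> k \<in> ?D\<^sub>p \<and> homog_deriv (e k) (\<theta> k)"
      and basis: "\<forall>\<delta>\<in>?D\<^sub>p. \<exists>!u. \<delta> = lin_comb u \<theta>"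
    using free_p unfolding free_with_exponents_def lin_comb_def[symmetric] by (elim exE conjE)
  have "\<forall>k. \<exists>G\<in>ker_phi_Z n a m. red_p_vec G = \<theta> k"
    using surj \<theta> by simp
  then obtain G where G: "\<And>k. G k \<in> deriv_module n a m" "\<And>k. of_int_mpoly \<circ> G k = \<theta> k"
    unfolding ker_phi_Z_eq_deriv_module red_p_vec_def red_p_eq_of_int_mpoly comp_def by metis
  define g where "g k j = hom_component (e k) (G k j)" for k j
  have lifts: "(\<lambda>k j. of_int_mpoly (g k j)) = \<theta>"
    using G(2) \<theta> by (auto simp: g_def of_int_mpoly_hom_component homog_deriv_def
        hom_component_homogeneous fun_eq_iff)
  interpret mod_p_basis_lift n a m e g "TYPE('p)"
  proof
    show "g k \<in> deriv_module n a m" for k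
      unfolding g_def by (rule hom_component_in_deriv_module[OF G(1)])
    show "homog_deriv (e k) (g k)" for k
      by (simp add: g_def homog_deriv_def homogeneous_hom_component)
    show "\<exists>!u. \<delta> = lin_comb u (\<lambda>k j. of_int_mpoly (g k j))" if "\<delta> \<in> ?D\<^sub>p" for \<delta>
      using basis that by (simp add: lifts)
    show "\<exists>j. (of_int (a i j) :: 'p mod_ring) \<noteq> 0" if "i < n" for i
      using primitive that prime_card_int[where 'a = 'p] by (auto simp: of_int_eq_0_iff_char_dvd)
  qed
  show ?thesis by (rule free_over_rat)
qed

end
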